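(* Let $\mathcal{H}$ be a Hilbert space and $T\in\mathcal{B}(\mathcal{H})$ a convex operator, i.e. $T^{*2}T^2-2T^*T+I\ge0$, satisfying $$c:=\sup_{n\ge0}\frac{\|T^n\|^2}{n+1}<\infty.$$ Let $\Delta=\frac12T^{*2}T^2-T^*T+\frac12 I$ (a positive operator) and let $T_1$ on $\mathcal{H}_1=\mathcal{H}\oplus\mathcal{H}$ be given by the block matrix $$T_1=\begin{pmatrix}T&0\\ \Delta^{1/2}&0\end{pmatrix}.$$ Then: (i) $\|T_1^nh\|^2=\frac12\big(\|T^{n+1}h\|^2+\|T^{n-1}h\|^2\big)$ for all $h\in\mathcal{H}\cong\mathcal{H}\oplus\{0\}$ and all $n\ge1$; (ii) $\|T_1^n\|^2\le c(n+1)$ for all $n\ge0$; (iii) $T_1$ is convex. *)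

theory Defs
  imports "HOL-Analysis.Analysis"
begin

definition is_adjoint :: "('a::real_inner \<Rightarrow> 'a) \<Rightarrow> ('a \<Rightarrow> 'a) \<Rightarrow> bool" where
  "is_adjoint T Ts \<longleftrightarrow> (\<forall>x y. inner (T x) y = inner x (Ts y))"

definition positive_op :: "('a::real_inner \<Rightarrow> 'a) \<Rightarrow> bool" where
  "positive_op A \<longleftrightarrow> bounded_linear A \<and> is_adjoint A A \<and> (\<forall>h. 0 \<le> inner (A h) h)"

definition convex_op :: "('a::real_inner \<Rightarrow> 'a) \<Rightarrow> bool" where
  "convex_op T \<longleftrightarrow> bounded_linear T \<and>
     (\<exists>Ts. is_adjoint T Ts \<and> positive_op (\<lambda>h. Ts (Ts (T (T h))) - 2 *\<^sub>R Ts (T h) + h))"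

end

theory Submission
  imports Defs
begin

text \<open>
  Since \<open>S\<close> is self-adjoint with \<open>S^2 = \<Delta>\<close>, we get
  \<open>||S u||^2 = <u, \<Delta> u> = ||T^2 u||^2/2 - ||T u||^2 + ||u||^2/2\<close>; and
  \<open>T1^n (x, y) = (T^n x, S T^(n-1) x)\<close> for \<open>n \<ge> 1\<close>, so in \<open>||T1^n (x, y)||^2\<close> the terms
  \<open>||T^n x||^2\<close> cancel, which is (i).
  The adjoint of \<open>T1\<close> is \<open>(x, y) \<mapsto> (T* x + S y, 0)\<close>, and the defect operator of \<open>T1\<close> works
  out to \<open>T* S^2 T \<oplus> I = R* R \<oplus> I\<close> with \<open>R = S T\<close>, which is positive: this is (iii).
  Convexity of \<open>T\<close> only serves to make \<open>\<Delta>\<close> positive, i.e. to guarantee that \<open>S\<close> exists.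
\<close>

lemma is_adjointD: "is_adjoint T Ts \<Longrightarrow> inner (T x) y = inner x (Ts y)"
  unfolding is_adjoint_def by blast

lemma is_adjoint_sym: "is_adjoint T Ts \<Longrightarrow> is_adjoint Ts T"
  unfolding is_adjoint_def by (metis inner_commute)

lemma is_adjoint_comp:
  "is_adjoint A As \<Longrightarrow> is_adjoint B Bs \<Longrightarrow> is_adjoint (\<lambda>x. A (B x)) (\<lambda>y. Bs (As y))"
  unfolding is_adjoint_def by simp

lemma is_adjoint_bounded_linear:
  fixes T Ts :: "'a::real_inner \<Rightarrow> 'a"
  assumes T: "bounded_linear T" and adj: "is_adjoint T Ts"
  shows "bounded_linear Ts"
proof -
  note adj_eq = is_adjointD[OF adj, symmetric]
  have add: "Ts (x + y) = Ts x + Ts y" for x y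
    by (subst vector_eq_ldot[symmetric]) (simp add: adj_eq inner_add_right)
  have scale: "Ts (r *\<^sub>R x) = r *\<^sub>R Ts x" for r x
    by (subst vector_eq_ldot[symmetric]) (simp add: adj_eq)
  obtain K where "0 \<le> K" and K: "\<And>x. norm (T x) \<le> norm x * K"
    using bounded_linear.nonneg_bounded[OF T] by blast
  have bound: "norm (Ts y) \<le> norm y * K" for y
  proof -
    have "norm (Ts y) * norm (Ts y) = inner (T (Ts y)) y"
      by (simp add: is_adjointD[OF adj] flip: power2_eq_square power2_norm_eq_inner)
    also have "\<dots> \<le> norm (T (Ts y)) * norm y"
      by (rule norm_cauchy_schwarz)
    also have "\<dots> \<le> norm (Ts y) * (norm y * K)"
      using mult_left_mono[OF K[of "Ts y"] norm_ge_zero[of y]] by (simp add: algebra_simps)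
    finally show ?thesis
      by (cases "Ts y = 0") (auto simp: \<open>0 \<le> K\<close>)
  qed
  show ?thesis
    by (rule bounded_linear_intro[where K = K]) (auto simp: add scale bound)
qed

lemma bounded_linear_funpow:
  fixes f :: "'a::real_normed_vector \<Rightarrow> 'a"
  assumes "bounded_linear f"
  shows "bounded_linear (f ^^ n)"
  by (induction n) (simp_all add: id_def comp_def bounded_linear_ident bounded_linear_compose[OF assms])

lemma positive_op_id: "positive_op (\<lambda>x. x)"
  by (simp add: positive_op_def is_adjoint_def bounded_linear_ident)

lemma positive_op_adjoint_comp:
  assumes "bounded_linear R" "bounded_linear Rs" "is_adjoint R Rs"
  shows "positive_op (\<lambda>x. Rs (R x))"
proof -
  have "inner (Rs (R x)) y = inner (R x) (R y)" for x y
    using is_adjointD[OF is_adjoint_sym[OF assms(3)]] by simp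
  then show ?thesis
    using assms(1,2) unfolding positive_op_def is_adjoint_def
    by (simp add: bounded_linear_compose inner_commute)
qed

lemma positive_op_prod:
  assumes "positive_op A" "positive_op B"
  shows "positive_op (\<lambda>p. (A (fst p), B (snd p)))"
  using assms unfolding positive_op_def is_adjoint_def
  by (auto intro!: bounded_linear_Pair bounded_linear_compose[OF _ bounded_linear_fst]
      bounded_linear_compose[OF _ bounded_linear_snd])

lemma norm_sq_le_onorm_sq:
  assumes "bounded_linear f"
  shows "(norm (f x))\<^sup>2 \<le> (onorm f)\<^sup>2 * (norm x)\<^sup>2"
  using onorm[OF assms, of x] by (simp add: power_mono flip: power_mult_distrib)

lemma onorm_sq_le:
  assumes f: "bounded_linear f" and "0 \<le> K" and bound: "\<And>x. (norm (f x))\<^sup>2 \<le> K * (norm x)\<^sup>2"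
  shows "(onorm f)\<^sup>2 \<le> K"
proof -
  have "norm (f x) \<le> sqrt K * norm x" for x
    using real_sqrt_le_mono[OF bound[of x]] by (simp add: real_sqrt_mult)
  then have "onorm f \<le> sqrt K"
    using \<open>0 \<le> K\<close> by (intro onorm_bound) simp_all
  then show ?thesis
    using onorm_pos_le[OF f] \<open>0 \<le> K\<close> by (metis power_mono real_sqrt_pow2)
qed

lemma norm_funpow_sq_le_SUP:
  fixes T :: "'a::real_normed_vector \<Rightarrow> 'a"
  assumes "bounded_linear T"
    and "bdd_above (range (\<lambda>n::nat. (onorm (T ^^ n))\<^sup>2 / real (n + 1)))"
  shows "(norm ((T ^^ n) x))\<^sup>2 \<le> (SUP n::nat. (onorm (T ^^ n))\<^sup>2 / real (n + 1)) * real (n + 1) * (norm x)\<^sup>2"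
proof -
  have "(onorm (T ^^ n))\<^sup>2 \<le> (SUP n::nat. (onorm (T ^^ n))\<^sup>2 / real (n + 1)) * real (n + 1)"
    using cSUP_upper[OF UNIV_I assms(2), of n] by (simp add: divide_le_eq)
  then show ?thesis
    using norm_sq_le_onorm_sq[OF bounded_linear_funpow[OF assms(1)]]
    by (meson mult_right_mono order_trans zero_le_power2)
qed

locale block_extension =
  fixes T Ts S :: "'a::real_inner \<Rightarrow> 'a" and T1 :: "'a \<times> 'a \<Rightarrow> 'a \<times> 'a"
  assumes T_bl: "bounded_linear T"
    and T_adj: "is_adjoint T Ts"
    and S_pos: "positive_op S"
    and S_sq: "\<And>h. S (S h) = (1/2) *\<^sub>R Ts (Ts (T (T h))) - Ts (T h) + (1/2) *\<^sub>R h"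
    and T1_pair: "\<And>x y. T1 (x, y) = (T x, S x)"
begin

lemma Ts_bl: "bounded_linear Ts"
  using is_adjoint_bounded_linear[OF T_bl T_adj] .

lemma S_bl: "bounded_linear S" and S_adj: "is_adjoint S S"
  using S_pos unfolding positive_op_def by blast+

lemma T1_eq: "T1 = (\<lambda>p. (T (fst p), S (fst p)))"
  by (rule ext) (metis T1_pair prod.collapse)

lemma T1_bl: "bounded_linear T1"
  unfolding T1_eq
  by (intro bounded_linear_Pair bounded_linear_compose[OF T_bl] bounded_linear_compose[OF S_bl]
      bounded_linear_fst)

lemma T1_funpow_Suc: "(T1 ^^ Suc m) (x, y) = ((T ^^ Suc m) x, S ((T ^^ m) x))"
  by (induction m) (simp_all add: T1_pair)

lemma norm_S_sq: "(norm (S u))\<^sup>2 = (1/2) * (norm (T (T u)))\<^sup>2 - (norm (T u))\<^sup>2 + (1/2) * (norm u)\<^sup>2"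
proof -
  note T_adj_eq = is_adjointD[OF T_adj, symmetric]
  have "(norm (S u))\<^sup>2 = inner u (S (S u))"
    by (simp add: power2_norm_eq_inner is_adjointD[OF S_adj])
  also have "\<dots> = (1/2) * inner (T (T u)) (T (T u)) - inner (T u) (T u) + (1/2) * inner u u"
    by (simp add: S_sq inner_add_right inner_diff_right T_adj_eq)
  finally show ?thesis
    by (simp add: power2_norm_eq_inner)
qed

lemma norm_T1_funpow_sq:
  assumes "n \<ge> 1"
  shows "(norm ((T1 ^^ n) (x, y)))\<^sup>2
    = (1/2) * ((norm ((T ^^ (n + 1)) x))\<^sup>2 + (norm ((T ^^ (n - 1)) x))\<^sup>2)"
proof -
  obtain m where "n = Suc m"
    using assms by (cases n) auto
  then show ?thesis
    unfolding \<open>n = Suc m\<close> T1_funpow_Suc by (simp add: norm_Pair norm_S_sq)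
qed

lemma norm_T1_funpow_sq_le:
  assumes T_growth: "\<And>k x. (norm ((T ^^ k) x))\<^sup>2 \<le> c * real (k + 1) * (norm x)\<^sup>2"
  shows "(norm ((T1 ^^ n) (x, y)))\<^sup>2 \<le> c * real (n + 1) * (norm (x, y))\<^sup>2"
proof (cases "n = 0")
  case True
  then show ?thesis
    using T_growth[of 0 x] T_growth[of 0 y] by (simp add: norm_Pair algebra_simps)
next
  case False
  \<comment> \<open>\<open>c \<ge> 0\<close> is not assumed; the case \<open>k = 0\<close> of the growth bound still gives \<open>c \<parallel>y\<parallel>\<^sup>2 \<ge> 0\<close>.\<close>
  have "0 \<le> c * (norm y)\<^sup>2"
    using T_growth[of 0 y] by simp (meson order_trans zero_le_power2)
  then have y_term: "0 \<le> c * real (n + 1) * (norm y)\<^sup>2"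
    by (metis mult.commute mult.left_commute mult_nonneg_nonneg of_nat_0_le_iff)
  have "(norm ((T1 ^^ n) (x, y)))\<^sup>2
      = (1/2) * ((norm ((T ^^ (n + 1)) x))\<^sup>2 + (norm ((T ^^ (n - 1)) x))\<^sup>2)"
    using False by (intro norm_T1_funpow_sq) simp
  also have "\<dots> \<le> (1/2) * (c * real (n + 2) * (norm x)\<^sup>2 + c * real n * (norm x)\<^sup>2)"
    using T_growth[of "n + 1" x] T_growth[of "n - 1" x] False by simp
  also have "\<dots> = c * real (n + 1) * (norm x)\<^sup>2"
    by (simp add: algebra_simps)
  also have "\<dots> \<le> c * real (n + 1) * (norm (x, y))\<^sup>2"
    using y_term by (simp add: norm_Pair algebra_simps)
  finally show ?thesis .
qed

definition T1s :: "'a \<times> 'a \<Rightarrow> 'a \<times> 'a" where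
  "T1s q = (Ts (fst q) + S (snd q), 0)"

lemma T1_adjoint: "is_adjoint T1 T1s"
  unfolding is_adjoint_def T1_eq T1s_def
  by (simp add: inner_add_right is_adjointD[OF T_adj] is_adjointD[OF S_adj])

lemma T1_defect: "T1s (T1s (T1 (T1 p))) - 2 *\<^sub>R T1s (T1 p) + p = (Ts (S (S (T (fst p)))), snd p)"
proof -
  interpret Ts: bounded_linear Ts by (fact Ts_bl)
  interpret S: bounded_linear S by (fact S_bl)
  show ?thesis
    by (simp add: T1_eq T1s_def Ts.add Ts.scaleR Ts.diff S.zero S_sq[of "fst p"] prod_eq_iff algebra_simps)
qed

lemma T1_convex: "convex_op T1"
proof -
  have defect_pos: "positive_op (\<lambda>p. ((\<lambda>x. Ts (S (S (T x)))) (fst p), (\<lambda>y. y) (snd p)))"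
    using positive_op_adjoint_comp[where R = "\<lambda>x. S (T x)" and Rs = "\<lambda>y. Ts (S y)"]
    by (intro positive_op_prod positive_op_id)
      (simp add: bounded_linear_compose T_bl S_bl Ts_bl is_adjoint_comp S_adj T_adj)
  then show ?thesis
    unfolding convex_op_def
    by (intro conjI T1_bl exI[of _ T1s]) (simp_all add: T1_adjoint T1_defect)
qed

end

theorem lemma3p1:
  fixes T Ts S :: "'a::{real_inner, complete_space} \<Rightarrow> 'a"
    and T1 :: "'a \<times> 'a \<Rightarrow> 'a \<times> 'a"
    and c :: real
  assumes T_bl: "bounded_linear T"
    and T_adj: "is_adjoint T Ts"
    and T_convex: "convex_op T"
    and bdd: "bdd_above (range (\<lambda>n::nat. (onorm (T ^^ n))\<^sup>2 / real (n + 1)))"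
    and c_def: "c = (SUP n::nat. (onorm (T ^^ n))\<^sup>2 / real (n + 1))"
    and S_pos: "positive_op S"
    and S_sq: "\<And>h. S (S h) = (1/2) *\<^sub>R Ts (Ts (T (T h))) - Ts (T h) + (1/2) *\<^sub>R h"
    and T1_def: "\<And>x y. T1 (x, y) = (T x, S x)"
  shows "(\<forall>n\<ge>1. \<forall>h. (norm ((T1 ^^ n) (h, 0)))\<^sup>2
            = (1/2) * ((norm ((T ^^ (n + 1)) h))\<^sup>2 + (norm ((T ^^ (n - 1)) h))\<^sup>2))
       \<and> (\<forall>n. (onorm (T1 ^^ n))\<^sup>2 \<le> c * real (n + 1))
       \<and> convex_op T1"
proof -
  interpret block_extension T Ts S T1
    using T_bl T_adj S_pos S_sq T1_def by (simp add: block_extension_def)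
  have T_growth: "(norm ((T ^^ k) x))\<^sup>2 \<le> c * real (k + 1) * (norm x)\<^sup>2" for k x
    unfolding c_def by (rule norm_funpow_sq_le_SUP[OF T_bl bdd])
  have "0 \<le> c"
    unfolding c_def using cSUP_upper[OF UNIV_I bdd, of 0] by simp (meson order_trans zero_le_power2)
  have "(onorm (T1 ^^ n))\<^sup>2 \<le> c * real (n + 1)" for n
    using norm_T1_funpow_sq_le[OF T_growth] \<open>0 \<le> c\<close>
    by (intro onorm_sq_le[OF bounded_linear_funpow[OF T1_bl]]) auto
  then show ?thesis
    using norm_T1_funpow_sq T1_convex by blast
qed

end
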